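(* Let $k\ge 3$, let $1\le i\le n-2$, and let $H_1,\dots,H_k$ be $i$-dimensional linear subspaces of $\mathbb{R}^n$. Set $d=i$ and $M_j=H_j$ for all $j$ if $2\le i\le n/2$, and set $d=n-i$ and $M_j=H_j^\perp$ for all $j$ if $n/2<i\le n-2$. Assume that: (i) there exist an orthonormal basis $e_1,\dots,e_n$ of $\mathbb{R}^n$ and numbers $0<\alpha_1<\cdots<\alpha_d<\pi/2$ such that $\pi,\alpha_1,\dots,\alpha_d$ are linearly independent over $\mathbb{Q}$ and $$M_1=\mathrm{lin}\{e_1,e_3,\dots,e_{2d-1}\},\quad M_2=\mathrm{lin}\{\cos\alpha_j\, e_{2j-1}+\sin\alpha_j\, e_{2j}: j=1,\dots,d\},$$ $$M_3=\mathrm{lin}\big(\{\cos\alpha_1\, e_1+\sin\alpha_1\, e_{2d}\}\cup\{\cos\alpha_j\, e_{2j-1}+\sin\alpha_j\, e_{2j-2}: j=2,\dots,d\}\big);$$ (ii) $M_1+\cdots+M_k=\mathbb{R}^n$; (iii) for each $j=3,\dots,k-1$, $M_{j+1}\cap(M_1+\cdots+M_j)^\perp=\{o\}$. If $E\subset S^{n-1}$ is nonempty, closed, and such that $R_{H_j}E=E$ for $j=1,\dots,k$, then $E=S^{n-1}$.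
   Context: For a linear subspace $H$ of $\mathbb{R}^n$, $R_H$ is the reflection $x\mapsto 2(x|H)-x$, with $x|H$ the orthogonal projection onto $H$; $H^\perp$ is the orthogonal complement; $\mathrm{lin}$ denotes linear hull; $o$ is the origin; $S^{n-1}$ is the unit sphere. *)

theory Defs
  imports "HOL-Analysis.Analysis"
begin

definition orth_proj :: "'a::euclidean_space set \<Rightarrow> 'a \<Rightarrow> 'a" where
  "orth_proj H x = (THE y. y \<in> H \<and> x - y \<in> orthogonal_comp H)"

definition refl_sub :: "'a::euclidean_space set \<Rightarrow> 'a \<Rightarrow> 'a" where
  "refl_sub H x = 2 *\<^sub>R orth_proj H x - x"

definition pi_alphas_Q_indep :: "nat \<Rightarrow> (nat \<Rightarrow> real) \<Rightarrow> bool" where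
  "pi_alphas_Q_indep d \<alpha> \<longleftrightarrow>
     (\<forall>q :: nat \<Rightarrow> rat.
        of_rat (q 0) * pi + (\<Sum>j=1..d. of_rat (q j) * \<alpha> j) = 0 \<longrightarrow> (\<forall>j\<in>{0..d}. q j = 0))"

end

(* Call E saturated in a subspace X if, together with every x, it contains every y with
   norm y = norm x and y - x in X.  For a closed E on the sphere, saturation in two subspaces
   that meet nontrivially gives saturation in their sum: maximise a linear functional over the
   slice of E by an affine space x + A + B.

   If M j = H j^perp then R_(M j) = - R_(H j), so the product of any two reflections R_(M a), R_(M b)
   preserves E.  The products R_(M 1) R_(M 2) and R_(M 1) R_(M 3) rotate the mutually orthogonal
   planes lin {e (2j-1), e (2j)}, resp. lin {e (2j-1), e (2j-2)} (indices cyclic), all at once by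
   the angles -2 alpha j.  As pi, alpha 1, ..., alpha d are rationally independent, Kronecker's
   theorem makes the powers of such a rotation dense in the torus of all simultaneous rotations of
   these planes; E being closed, it is saturated in each single plane.  Consecutive planes share a
   coordinate vector, so E is saturated in lin {e 1, ..., e (2d)} = M 1 + M 2 + M 3.

   Condition (iii) then adds M 4, ..., M k one at a time: the reflection in H (j+1) carries the
   current saturated subspace A to a second one, which meets A because dim M (j+1) < dim A, and
   whose sum with A contains M (j+1).  By (ii) E is saturated in the whole space, i.e. it is the
   whole sphere. *)

theory Submission
  imports Defs
begin

section \<open>Orthogonal projections and reflections\<close>

lemma orth_proj_eqI:
  fixes H :: "'a::euclidean_space set"
  assumes "subspace H" "y \<in> H" "\<And>h. h \<in> H \<Longrightarrow> (x - y) \<bullet> h = 0"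
  shows "orth_proj H x = y"
  unfolding orth_proj_def
proof (rule the_equality)
  show "y \<in> H \<and> x - y \<in> orthogonal_comp H"
    using assms by (auto simp: orthogonal_comp_def orthogonal_def inner_commute)
  fix y' assume y': "y' \<in> H \<and> x - y' \<in> orthogonal_comp H"
  then have "y' - y \<in> H" using assms subspace_diff by blast
  moreover have "\<forall>h\<in>H. h \<bullet> (x - y') = 0"
    using y' by (simp add: orthogonal_comp_def orthogonal_def)
  ultimately have "(x - y) \<bullet> (y' - y) = 0" "(x - y') \<bullet> (y' - y) = 0"
    using assms(3) by (metis inner_commute)+
  then have "(y' - y) \<bullet> (y' - y) = 0" by (simp add: inner_diff_left inner_diff_right)
  then show "y' = y" by simp
qed

lemma orth_proj_exists:
  fixes H :: "'a::euclidean_space set"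
  assumes "subspace H"
  obtains y where "y \<in> H" "\<And>h. h \<in> H \<Longrightarrow> (x - y) \<bullet> h = 0" "orth_proj H x = y"
proof -
  obtain y z where "y \<in> span H" "\<And>w. w \<in> span H \<Longrightarrow> orthogonal z w" "x = y + z"
    using orthogonal_subspace_decomp_exists[of H x] by blast
  moreover have "span H = H" using assms by (simp add: span_eq_iff)
  ultimately have "y \<in> H" "\<And>h. h \<in> H \<Longrightarrow> (x - y) \<bullet> h = 0"
    by (auto simp: orthogonal_def)
  with orth_proj_eqI[OF assms] that show thesis by blast
qed

lemma orth_proj_in:
  fixes H :: "'a::euclidean_space set"
  assumes "subspace H"
  shows "orth_proj H x \<in> H"
  using orth_proj_exists[OF assms] by metis

lemma orth_proj_orthogonal:
  fixes H :: "'a::euclidean_space set"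
  assumes "subspace H" "h \<in> H"
  shows "(x - orth_proj H x) \<bullet> h = 0"
  using orth_proj_exists[OF assms(1)] assms(2) by metis

lemma inner_orth_proj:
  fixes H :: "'a::euclidean_space set"
  assumes "subspace H" "h \<in> H"
  shows "orth_proj H x \<bullet> h = x \<bullet> h"
  using orth_proj_orthogonal[OF assms, of x] by (simp add: inner_diff_left)

lemma linear_orth_proj:
  fixes H :: "'a::euclidean_space set"
  assumes H: "subspace H"
  shows "linear (orth_proj H)"
proof
  fix x y
  show "orth_proj H (x + y) = orth_proj H x + orth_proj H y"
    using orth_proj_orthogonal[OF H, of _ x] orth_proj_orthogonal[OF H, of _ y]
    by (intro orth_proj_eqI[OF H] subspace_add[OF H] orth_proj_in[OF H])
       (simp add: algebra_simps inner_diff_left inner_add_left)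
next
  fix c x
  show "orth_proj H (c *\<^sub>R x) = c *\<^sub>R orth_proj H x"
    using orth_proj_orthogonal[OF H, of _ x]
    by (intro orth_proj_eqI[OF H] subspace_scale[OF H] orth_proj_in[OF H])
       (simp add: inner_diff_left)
qed

lemma orth_proj_idem:
  fixes H :: "'a::euclidean_space set"
  assumes "subspace H" "y \<in> H"
  shows "orth_proj H y = y"
  using assms by (intro orth_proj_eqI) auto

lemma orth_proj_orthogonal_comp:
  fixes H :: "'a::euclidean_space set"
  assumes H: "subspace H"
  shows "orth_proj (orthogonal_comp H) x = x - orth_proj H x"
proof (rule orth_proj_eqI[OF subspace_orthogonal_comp])
  show "x - orth_proj H x \<in> orthogonal_comp H"
    using orth_proj_orthogonal[OF H] by (auto simp: orthogonal_comp_def orthogonal_def inner_commute)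
  fix h assume "h \<in> orthogonal_comp H"
  then show "(x - (x - orth_proj H x)) \<bullet> h = 0"
    using orth_proj_in[OF H] by (auto simp: orthogonal_comp_def orthogonal_def)
qed

lemma orthogonal_orth_proj_residual:
  fixes H :: "'a::euclidean_space set"
  assumes H: "subspace H"
  shows "orthogonal (orth_proj H x) (x - orth_proj H x)"
  using orth_proj_orthogonal[OF H orth_proj_in[OF H], of x] by (simp add: orthogonal_def inner_commute)

lemma norm_orth_proj_pythagoras:
  fixes H :: "'a::euclidean_space set"
  assumes H: "subspace H"
  shows "(norm x)\<^sup>2 = (norm (orth_proj H x))\<^sup>2 + (norm (x - orth_proj H x))\<^sup>2"
  using norm_add_Pythagorean[OF orthogonal_orth_proj_residual[OF H, of x]] by simp

lemma orth_proj_span_orthonormal: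
  fixes f :: "'b \<Rightarrow> 'a::euclidean_space"
  assumes J: "finite J"
    and orthonormal: "\<And>i j. i \<in> J \<Longrightarrow> j \<in> J \<Longrightarrow> f i \<bullet> f j = (if i = j then 1 else 0)"
  shows "orth_proj (span (f ` J)) x = (\<Sum>j\<in>J. (x \<bullet> f j) *\<^sub>R f j)"
proof (rule orth_proj_eqI[OF subspace_span])
  show "(\<Sum>j\<in>J. (x \<bullet> f j) *\<^sub>R f j) \<in> span (f ` J)"
    by (intro span_sum span_scale span_base) auto
  have "(x - (\<Sum>j\<in>J. (x \<bullet> f j) *\<^sub>R f j)) \<bullet> f i = 0" if i: "i \<in> J" for i
  proof -
    have "(\<Sum>j\<in>J. (x \<bullet> f j) *\<^sub>R f j) \<bullet> f i = (\<Sum>j\<in>J. (x \<bullet> f j) * (if j = i then 1 else 0))"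
      by (simp add: inner_sum_left orthonormal i)
    also have "\<dots> = x \<bullet> f i" using J i by (simp add: if_distrib sum.delta cong: if_cong)
    finally show ?thesis by (simp add: inner_diff_left)
  qed
  then have "orthogonal (x - (\<Sum>j\<in>J. (x \<bullet> f j) *\<^sub>R f j)) h" if "h \<in> span (f ` J)" for h
    using orthogonal_to_span[OF that] by (auto simp: orthogonal_def)
  then show "(x - (\<Sum>j\<in>J. (x \<bullet> f j) *\<^sub>R f j)) \<bullet> h = 0" if "h \<in> span (f ` J)" for h
    using that by (simp add: orthogonal_def)
qed

lemma refl_sub_span_orthonormal:
  fixes f :: "'b \<Rightarrow> 'a::euclidean_space"
  assumes "finite J" "\<And>i j. i \<in> J \<Longrightarrow> j \<in> J \<Longrightarrow> f i \<bullet> f j = (if i = j then 1 else 0)"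
  shows "refl_sub (span (f ` J)) x = 2 *\<^sub>R (\<Sum>j\<in>J. (x \<bullet> f j) *\<^sub>R f j) - x"
  by (simp add: refl_sub_def orth_proj_span_orthonormal[OF assms])

lemma refl_sub_orthogonal_comp:
  fixes H :: "'a::euclidean_space set"
  assumes "subspace H"
  shows "refl_sub (orthogonal_comp H) x = - refl_sub H x"
  unfolding refl_sub_def orth_proj_orthogonal_comp[OF assms] by (simp add: algebra_simps scaleR_2)

lemma linear_refl_sub:
  fixes H :: "'a::euclidean_space set"
  assumes "subspace H"
  shows "linear (refl_sub H)"
  unfolding refl_sub_def[abs_def]
  by (intro linear_compose_sub linear_compose_scale_right linear_orth_proj[OF assms] linear_id[unfolded id_def])

lemma refl_sub_refl_sub:
  fixes H :: "'a::euclidean_space set"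
  assumes H: "subspace H"
  shows "refl_sub H (refl_sub H x) = x"
proof -
  interpret linear "orth_proj H" by (rule linear_orth_proj[OF H])
  show ?thesis
    by (simp add: refl_sub_def diff scale orth_proj_idem[OF H orth_proj_in[OF H]] algebra_simps
        flip: scaleR_add_left)
qed

lemma norm_refl_sub:
  fixes H :: "'a::euclidean_space set"
  assumes H: "subspace H"
  shows "norm (refl_sub H x) = norm x"
proof -
  let ?p = "orth_proj H x"
  have "refl_sub H x = ?p + (- (x - ?p))"
    by (simp add: refl_sub_def algebra_simps scaleR_2)
  moreover have "orthogonal ?p (- (x - ?p))"
    using orthogonal_orth_proj_residual[OF H, of x] by (simp add: orthogonal_def inner_diff_right)
  ultimately have "(norm (refl_sub H x))\<^sup>2 = (norm x)\<^sup>2"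
    using norm_add_Pythagorean norm_orth_proj_pythagoras[OF H, of x] by (metis norm_minus_cancel)
  then show ?thesis by (rule power2_eq_imp_eq) simp_all
qed

lemma refl_sub_eq_neg:
  fixes H :: "'a::euclidean_space set"
  assumes H: "subspace H" and x: "\<And>h. h \<in> H \<Longrightarrow> x \<bullet> h = 0"
  shows "refl_sub H x = - x"
proof -
  have "orth_proj H x = 0" using x by (intro orth_proj_eqI[OF H subspace_0[OF H]]) auto
  then show ?thesis by (simp add: refl_sub_def)
qed

section \<open>Saturated sets\<close>

definition saturated :: "'a::real_normed_vector set \<Rightarrow> 'a set \<Rightarrow> bool" where
  "saturated E X \<longleftrightarrow> (\<forall>x\<in>E. \<forall>y. norm y = norm x \<and> y - x \<in> X \<longrightarrow> y \<in> E)"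

lemma saturatedD: "saturated E X \<Longrightarrow> x \<in> E \<Longrightarrow> norm y = norm x \<Longrightarrow> y - x \<in> X \<Longrightarrow> y \<in> E"
  unfolding saturated_def by blast

lemma saturated_subset: "saturated E X \<Longrightarrow> Y \<subseteq> X \<Longrightarrow> saturated E Y"
  unfolding saturated_def by blast

lemma saturated_UNIV_imp_sphere:
  fixes E :: "'a::real_normed_vector set"
  assumes "saturated E UNIV" "E \<subseteq> sphere 0 1" "E \<noteq> {}"
  shows "E = sphere 0 1"
proof -
  obtain x where "x \<in> E" using assms(3) by blast
  then have "y \<in> E" if "y \<in> sphere 0 1" for y
    using saturatedD[OF assms(1)] that assms(2) by fastforce
  then show ?thesis using assms(2) by blast
qed

lemma saturated_image:
  fixes R :: "'a::euclidean_space \<Rightarrow> 'a"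
  assumes sat: "saturated E X" and R: "linear R" "\<And>x. R (R x) = x" "\<And>x. norm (R x) = norm x"
    and E: "\<And>x. x \<in> E \<Longrightarrow> R x \<in> E"
  shows "saturated E (R ` X)"
  unfolding saturated_def
proof (intro ballI allI impI)
  fix x y assume x: "x \<in> E" and y: "norm y = norm x \<and> y - x \<in> R ` X"
  then obtain w where "w \<in> X" "y - x = R w" by blast
  moreover have "R y - R x = R (y - x)" by (simp add: linear_diff[OF R(1)])
  ultimately have "R y \<in> E"
    using saturatedD[OF sat E[OF x], of "R y"] R y by simp
  then show "y \<in> E" using E R(2) by metis
qed

lemma saturated_refl_sub:
  fixes H :: "'a::euclidean_space set"
  assumes "saturated E X" "subspace H" "\<And>x. x \<in> E \<Longrightarrow> refl_sub H x \<in> E"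
  shows "saturated E (refl_sub H ` X)"
  using assms by (intro saturated_image linear_refl_sub refl_sub_refl_sub norm_refl_sub)

lemma unit_vector_eqI:
  fixes y z :: "'a::real_inner"
  assumes "norm z = 1" "norm y = 1" "0 \<le> l" "(z - l *\<^sub>R y) \<bullet> (z - y) = 0"
  shows "z = y"
proof -
  have "z \<bullet> z = 1" "y \<bullet> y = 1" using assms(1,2) by (simp_all add: dot_square_norm)
  then have "(z - l *\<^sub>R y) \<bullet> (z - y) = (1 - z \<bullet> y) * (1 + l)"
    by (simp add: inner_diff_left inner_diff_right inner_commute[of y z] algebra_simps)
  then have "(1 - z \<bullet> y) * (1 + l) = 0" using assms(4) by simp
  then have "z \<bullet> y = 1" using assms(3) by simp
  then have "(z - y) \<bullet> (z - y) = 0"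
    using \<open>z \<bullet> z = 1\<close> \<open>y \<bullet> y = 1\<close> by (simp add: inner_diff_left inner_diff_right inner_commute)
  then show ?thesis by simp
qed

lemma norm_orth_proj_swap:
  fixes X :: "'a::euclidean_space set"
  assumes X: "subspace X" and a: "a \<in> X" "norm a = norm (orth_proj X z)"
  shows "norm (z - orth_proj X z + a) = norm z"
proof -
  have "orthogonal (z - orth_proj X z) a"
    using orth_proj_orthogonal[OF X a(1), of z] by (simp add: orthogonal_def)
  then have "(norm (z - orth_proj X z + a))\<^sup>2 = (norm (z - orth_proj X z))\<^sup>2 + (norm a)\<^sup>2"
    by (rule norm_add_Pythagorean)
  also have "\<dots> = (norm z)\<^sup>2" using norm_orth_proj_pythagoras[OF X, of z] a(2) by simp
  finally show ?thesis by (rule power2_eq_imp_eq) simp_all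
qed

lemma exists_maximizer_affine_slice:
  fixes E V :: "'a::euclidean_space set"
  assumes "compact E" "subspace V" "x \<in> E"
  obtains z where "z \<in> E" "z - x \<in> V" "\<And>z'. z' \<in> E \<Longrightarrow> z' - x \<in> V \<Longrightarrow> z' \<bullet> y \<le> z \<bullet> y"
proof -
  let ?F = "E \<inter> (\<lambda>z. z - x) -` V"
  have "closed ((\<lambda>z. z - x) -` V)"
    by (intro closed_vimage closed_subspace assms(2) continuous_intros)
  then have "compact ?F" using assms(1) by (intro compact_Int_closed)
  moreover have "?F \<noteq> {}" using assms(3) subspace_0[OF assms(2)] by auto
  moreover have "continuous_on ?F (\<lambda>z. z \<bullet> y)" by (intro continuous_intros)
  ultimately obtain z where "z \<in> ?F" "\<And>z'. z' \<in> ?F \<Longrightarrow> z' \<bullet> y \<le> z \<bullet> y"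
    using continuous_attains_sup by metis
  with that show thesis by blast
qed

text \<open>Turning the X-component of z inside X keeps z in E and in the slice x + V; so by maximality
  and the equality case of Cauchy-Schwarz it is aligned with the X-component of y.\<close>
lemma orth_proj_maximizer_parallel:
  fixes X V :: "'a::euclidean_space set"
  assumes sat: "saturated E X" and X: "subspace X" and V: "subspace V" and XV: "X \<subseteq> V"
    and z: "z \<in> E" "z - x \<in> V"
    and max: "\<And>z'. z' \<in> E \<Longrightarrow> z' - x \<in> V \<Longrightarrow> z' \<bullet> y \<le> z \<bullet> y"
    and py: "orth_proj X y \<noteq> 0"
  shows "orth_proj X z = (norm (orth_proj X z) / norm (orth_proj X y)) *\<^sub>R orth_proj X y"
proof -
  let ?P = "orth_proj X"
  define a where "a = (norm (?P z) / norm (?P y)) *\<^sub>R ?P y"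
  have a: "a \<in> X" "norm a = norm (?P z)"
    using py by (auto simp: a_def intro: subspace_scale[OF X] orth_proj_in[OF X])
  have move: "a - ?P z \<in> X" by (intro subspace_diff[OF X] a orth_proj_in[OF X])
  define z' where "z' = z - ?P z + a"
  have "z' \<in> E"
    using saturatedD[OF sat z(1) norm_orth_proj_swap[OF X a]] move by (simp add: z'_def)
  moreover have "z' - x \<in> V"
    using subspace_add[OF V z(2), of "a - ?P z"] move XV by (auto simp: z'_def algebra_simps)
  ultimately have "z' \<bullet> y \<le> z \<bullet> y" by (rule max)
  moreover have "?P z \<bullet> y = ?P z \<bullet> ?P y" "a \<bullet> y = a \<bullet> ?P y"
    using inner_orth_proj[OF X orth_proj_in[OF X], of y z] inner_orth_proj[OF X a(1), of y]
    by (simp_all add: inner_commute)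
  moreover have "a \<bullet> ?P y = norm (?P z) * norm (?P y)"
    using py by (simp add: a_def power2_norm_eq_inner[symmetric] power2_eq_square)
  ultimately have "norm (?P z) * norm (?P y) \<le> ?P z \<bullet> ?P y"
    by (simp add: z'_def inner_diff_left inner_add_left)
  then have "?P z \<bullet> ?P y = norm (?P z) * norm (?P y)"
    using norm_cauchy_schwarz[of "?P z" "?P y"] by simp
  then have "norm (?P z) *\<^sub>R ?P y = norm (?P y) *\<^sub>R ?P z"
    by (simp add: norm_cauchy_schwarz_eq)
  then have "(1 / norm (?P y)) *\<^sub>R (norm (?P z) *\<^sub>R ?P y) = ?P z" using py by simp
  then show ?thesis by simp
qed

lemma orthogonal_span_Un:
  fixes A B :: "'a::euclidean_space set"
  assumes "v \<in> span (A \<union> B)" "\<And>h. h \<in> A \<Longrightarrow> w \<bullet> h = 0" "\<And>h. h \<in> B \<Longrightarrow> w \<bullet> h = 0"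
  shows "w \<bullet> v = 0"
  using orthogonal_to_span[OF assms(1), of w] assms(2,3) by (auto simp: orthogonal_def)

text \<open>Let z maximise the inner product with y over E \<inter> (x + V). Its A- and B-components are
  nonnegative multiples of those of y, with one common factor l because c lies in A \<inter> B.
  Hence z - l y is orthogonal to V, which contains z - y, and this forces z = y.\<close>
lemma saturated_span_Un_nonorthogonal:
  fixes E A B :: "'a::euclidean_space set"
  assumes E: "E \<subseteq> sphere 0 1" "closed E"
    and A: "subspace A" "saturated E A" and B: "subspace B" "saturated E B"
    and c: "c \<in> A" "c \<in> B"
    and x: "x \<in> E" and y: "norm y = 1" "y - x \<in> span (A \<union> B)" "y \<bullet> c \<noteq> 0"
  shows "y \<in> E"
proof -
  let ?V = "span (A \<union> B)"
  have "compact E" using E bounded_subset[OF bounded_sphere] by (auto simp: compact_eq_bounded_closed)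
  then obtain z where z: "z \<in> E" "z - x \<in> ?V"
    and max: "\<And>z'. z' \<in> E \<Longrightarrow> z' - x \<in> ?V \<Longrightarrow> z' \<bullet> y \<le> z \<bullet> y"
    using exists_maximizer_affine_slice[OF _ subspace_span x] by blast
  have "orth_proj A y \<bullet> c = y \<bullet> c" "orth_proj B y \<bullet> c = y \<bullet> c"
    by (simp_all add: inner_orth_proj A B c)
  then have "orth_proj A y \<noteq> 0" "orth_proj B y \<noteq> 0" using y(3) by auto
  moreover have "A \<subseteq> ?V" "B \<subseteq> ?V" using span_superset[of "A \<union> B"] by auto
  ultimately obtain la lb where la: "orth_proj A z = la *\<^sub>R orth_proj A y" "0 \<le> la"
    and lb: "orth_proj B z = lb *\<^sub>R orth_proj B y"
    using orth_proj_maximizer_parallel[OF A(2,1) subspace_span _ z max]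
      orth_proj_maximizer_parallel[OF B(2,1) subspace_span _ z max]
    by (metis divide_nonneg_nonneg norm_ge_zero)
  have "z \<bullet> c = la * (y \<bullet> c)" "z \<bullet> c = lb * (y \<bullet> c)"
    using inner_orth_proj[OF A(1) c(1), of z] inner_orth_proj[OF B(1) c(2), of z] la lb
      inner_orth_proj[OF A(1) c(1), of y] inner_orth_proj[OF B(1) c(2), of y] by simp_all
  then have "la = lb" using y(3) by simp
  have "z - y \<in> ?V" using span_diff[OF z(2) y(2)] by simp
  moreover have "(z - la *\<^sub>R y) \<bullet> h = 0" if "h \<in> A" for h
    using inner_orth_proj[OF A(1) that, of z] inner_orth_proj[OF A(1) that, of y] la
    by (simp add: inner_diff_left)
  moreover have "(z - la *\<^sub>R y) \<bullet> h = 0" if "h \<in> B" for h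
    using inner_orth_proj[OF B(1) that, of z] inner_orth_proj[OF B(1) that, of y] lb \<open>la = lb\<close>
    by (simp add: inner_diff_left)
  ultimately have "(z - la *\<^sub>R y) \<bullet> (z - y) = 0" by (rule orthogonal_span_Un)
  then have "z = y" using unit_vector_eqI[of z y la] z(1) E(1) y(1) la(2) by auto
  then show ?thesis using z(1) by simp
qed

lemma saturated_span_Un_nonzero_component:
  fixes E A B X :: "'a::euclidean_space set"
  assumes E: "E \<subseteq> sphere 0 1" "closed E"
    and A: "subspace A" "saturated E A" and B: "subspace B" "saturated E B"
    and c: "c \<in> A" "c \<in> B" "c \<noteq> 0"
    and x: "x \<in> E" and y: "norm y = 1" "y - x \<in> span (A \<union> B)"
    and X: "subspace X" "saturated E X" "X \<subseteq> span (A \<union> B)" "c \<in> X" "orth_proj X y \<noteq> 0"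
  shows "y \<in> E"
proof -
  \<comment> \<open>turn the X-component of y inside X onto a vector not orthogonal to c\<close>
  define a where "a = (norm (orth_proj X y) / norm c) *\<^sub>R c"
  have a: "a \<in> X" "norm a = norm (orth_proj X y)"
    using c(3) by (simp_all add: a_def subspace_scale[OF X(1) X(4)])
  have move: "a - orth_proj X y \<in> X" by (intro subspace_diff[OF X(1)] a orth_proj_in[OF X(1)])
  define y' where "y' = y - orth_proj X y + a"
  have "norm y' = 1" using norm_orth_proj_swap[OF X(1) a] y(1) by (simp add: y'_def)
  moreover have "y' - x \<in> span (A \<union> B)"
    using subspace_add[OF subspace_span y(2), of "a - orth_proj X y"] move X(3)
    by (auto simp: y'_def algebra_simps)
  moreover have "y' \<bullet> c = norm (orth_proj X y) * norm c"
    using orth_proj_orthogonal[OF X(1,4), of y] c(3)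
    by (simp add: y'_def a_def inner_add_left dot_square_norm power2_eq_square)
  then have "y' \<bullet> c \<noteq> 0" using X(5) c(3) by simp
  ultimately have "y' \<in> E" by (rule saturated_span_Un_nonorthogonal[OF E A B c(1,2) x])
  moreover have "y - y' \<in> X" using subspace_neg[OF X(1) move] by (simp add: y'_def)
  ultimately show "y \<in> E" using saturatedD[OF X(2)] y(1) \<open>norm y' = 1\<close> by metis
qed

lemma saturated_span_Un:
  fixes E A B :: "'a::euclidean_space set"
  assumes E: "E \<subseteq> sphere 0 1" "closed E"
    and A: "subspace A" "saturated E A" and B: "subspace B" "saturated E B"
    and c: "c \<in> A" "c \<in> B" "c \<noteq> 0"
  shows "saturated E (span (A \<union> B))"
  unfolding saturated_def
proof (intro ballI allI impI)
  fix x y assume x: "x \<in> E" and "norm y = norm x \<and> y - x \<in> span (A \<union> B)"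
  then have y: "norm y = 1" "y - x \<in> span (A \<union> B)" using E(1) by auto
  have AB: "A \<subseteq> span (A \<union> B)" "B \<subseteq> span (A \<union> B)" using span_superset[of "A \<union> B"] by auto
  consider "y \<bullet> c \<noteq> 0" | "orth_proj A y \<noteq> 0" | "orth_proj B y \<noteq> 0"
    | "orth_proj A y = 0" "orth_proj B y = 0" by blast
  then show "y \<in> E"
  proof cases
    case 1 then show ?thesis using saturated_span_Un_nonorthogonal[OF E A B c(1,2) x y] by blast
  next
    case 2 then show ?thesis
      using saturated_span_Un_nonzero_component[OF E A B c x y A AB(1) c(1)] by blast
  next
    case 3 then show ?thesis
      using saturated_span_Un_nonzero_component[OF E A B c x y B AB(2) c(2)] by blast
  next
    case 4
    then have "(y - 0 *\<^sub>R x) \<bullet> (y - x) = 0"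
      using inner_orth_proj[OF A(1), of _ y] inner_orth_proj[OF B(1), of _ y]
      by (intro orthogonal_span_Un[OF y(2)]; simp)
    then have "y = x" using unit_vector_eqI[of y x 0] y(1) x E(1) by auto
    then show ?thesis using x by simp
  qed
qed

section \<open>Rotations of planes and tori\<close>

definition rot :: "'a::real_inner \<Rightarrow> 'a \<Rightarrow> real \<Rightarrow> 'a \<Rightarrow> 'a" where
  "rot u v t x = x + ((cos t - 1) * (x \<bullet> u) - sin t * (x \<bullet> v)) *\<^sub>R u
                   + (sin t * (x \<bullet> u) + (cos t - 1) * (x \<bullet> v)) *\<^sub>R v"

lemma rot_zero [simp]: "rot u v 0 x = x"
  by (simp add: rot_def)

lemma rot_diff_cong: "y \<bullet> u = x \<bullet> u \<Longrightarrow> y \<bullet> v = x \<bullet> v \<Longrightarrow> rot u v t y - y = rot u v t x - x"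
  by (simp add: rot_def)

lemma inner_rot_diff_orthogonal: "w \<bullet> u = 0 \<Longrightarrow> w \<bullet> v = 0 \<Longrightarrow> (rot u v t x - x) \<bullet> w = 0"
  by (simp add: rot_def inner_add_left inner_commute[of u w] inner_commute[of v w])

context
  fixes u v :: "'a::real_inner"
  assumes uu: "u \<bullet> u = 1" and vv: "v \<bullet> v = 1" and uv: "u \<bullet> v = 0"
begin

lemma inner_rot_left_u: "rot u v t x \<bullet> u = cos t * (x \<bullet> u) - sin t * (x \<bullet> v)"
  using uu uv by (simp add: rot_def inner_add_left inner_commute[of v u] algebra_simps)

lemma inner_rot_left_v: "rot u v t x \<bullet> v = sin t * (x \<bullet> u) + cos t * (x \<bullet> v)"
  using vv uv by (simp add: rot_def inner_add_left algebra_simps)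

lemma rot_rot: "rot u v s (rot u v t x) = rot u v (s + t) x"
proof -
  define p q where "p = x \<bullet> u" and "q = x \<bullet> v"
  have "(cos t - 1) * p - sin t * q
      + ((cos s - 1) * (cos t * p - sin t * q) - sin s * (sin t * p + cos t * q))
      = (cos (s + t) - 1) * p - sin (s + t) * q"
    "sin t * p + (cos t - 1) * q
      + (sin s * (cos t * p - sin t * q) + (cos s - 1) * (sin t * p + cos t * q))
      = sin (s + t) * p + (cos (s + t) - 1) * q"
    by (simp_all add: cos_add sin_add algebra_simps)
  then show ?thesis
    unfolding rot_def[of u v s] inner_rot_left_u inner_rot_left_v
    by (simp add: rot_def p_def q_def algebra_simps flip: scaleR_add_left)
qed

lemma rot_exists:
  assumes "norm y = norm x" "y - x \<in> span {u, v}"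
  obtains t where "y = rot u v t x"
proof -
  define p q p' q' where "p = x \<bullet> u" and "q = x \<bullet> v" and "p' = y \<bullet> u" and "q' = y \<bullet> v"
  define w where "w = y - x - (p' - p) *\<^sub>R u - (q' - q) *\<^sub>R v"
  have "u \<in> span {u, v}" "v \<in> span {u, v}" by (simp_all add: span_base)
  then have "w \<in> span {u, v}"
    unfolding w_def using assms(2) by (intro span_diff[OF span_diff] span_scale)
  moreover have "w \<bullet> u = 0" "w \<bullet> v = 0"
    using uu vv uv by (simp_all add: w_def p_def q_def p'_def q'_def inner_diff_left inner_commute[of v u])
  ultimately have "w = 0"
    using orthogonal_to_span[of w "{u, v}" w] by (auto simp: orthogonal_def)
  then have y: "y = x + (p' - p) *\<^sub>R u + (q' - q) *\<^sub>R v" unfolding w_def by (simp add: algebra_simps)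
  have "y \<bullet> y = x \<bullet> x" using assms(1) by (simp add: dot_square_norm)
  then have pq: "p'\<^sup>2 + q'\<^sup>2 = p\<^sup>2 + q\<^sup>2"
    unfolding y using uu vv uv
    by (simp add: p_def q_def inner_add_left inner_add_right inner_commute power2_eq_square algebra_simps)
  show thesis
  proof (cases "p\<^sup>2 + q\<^sup>2 = 0")
    case True
    then have "p = 0" "q = 0" "p' = 0" "q' = 0" using pq by (simp_all add: sum_power2_eq_zero_iff)
    then show thesis using that[of 0] y by simp
  next
    case False
    define r where "r = p\<^sup>2 + q\<^sup>2"
    \<comment> \<open>the rotation taking (p, q) to (p', q')\<close>
    have "((p * p' + q * q') / r)\<^sup>2 + ((p * q' - q * p') / r)\<^sup>2 = 1"
    proof -
      have "(p * p' + q * q')\<^sup>2 + (p * q' - q * p')\<^sup>2 = (p\<^sup>2 + q\<^sup>2) * (p'\<^sup>2 + q'\<^sup>2)"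
        by (simp add: power2_eq_square algebra_simps)
      then have "(p * p' + q * q')\<^sup>2 + (p * q' - q * p')\<^sup>2 = r\<^sup>2"
        using pq by (simp add: r_def power2_eq_square)
      then show ?thesis using False by (simp add: r_def power_divide add_divide_distrib [symmetric])
    qed
    then obtain t where ct: "cos t = (p * p' + q * q') / r" and st: "sin t = (p * q' - q * p') / r"
      by (metis sincos_total_2pi)
    have "r \<noteq> 0" using False by (simp add: r_def)
    moreover have "(p * p' + q * q') * p - (p * q' - q * p') * q = p' * r"
      "(p * q' - q * p') * p + (p * p' + q * q') * q = q' * r"
      by (simp_all add: r_def power2_eq_square algebra_simps)
    moreover have "cos t * p - sin t * q = ((p * p' + q * q') * p - (p * q' - q * p') * q) / r"
      "sin t * p + cos t * q = ((p * q' - q * p') * p + (p * p' + q * q') * q) / r"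
      unfolding ct st by (simp_all add: divide_simps)
    ultimately have "cos t * p - sin t * q = p'" "sin t * p + cos t * q = q'" by simp_all
    then have "rot u v t x = y"
      unfolding y rot_def by (simp add: p_def q_def algebra_simps flip: scaleR_add_left)
    then show thesis using that[of t] by simp
  qed
qed

lemma saturated_plane_if_rot_invariant:
  assumes "\<And>t x. x \<in> E \<Longrightarrow> rot u v t x \<in> E"
  shows "saturated E (span {u, v})"
  unfolding saturated_def using rot_exists assms by metis

end

definition orthonormal_frame :: "('b \<Rightarrow> 'a::real_inner) \<Rightarrow> ('b \<Rightarrow> 'a) \<Rightarrow> 'b set \<Rightarrow> bool" where
  "orthonormal_frame u v J \<longleftrightarrow> (\<forall>i\<in>J. \<forall>j\<in>J. u i \<bullet> u j = (if i = j then 1 else 0)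
     \<and> v i \<bullet> v j = (if i = j then 1 else 0) \<and> u i \<bullet> v j = 0)"

lemma orthonormal_frameD:
  assumes "orthonormal_frame u v J" "i \<in> J" "j \<in> J"
  shows "u i \<bullet> u j = (if i = j then 1 else 0)" "v i \<bullet> v j = (if i = j then 1 else 0)"
    "u i \<bullet> v j = 0" "v i \<bullet> u j = 0"
  using assms unfolding orthonormal_frame_def by (auto simp: inner_commute)

text \<open>For an orthonormal frame the planes span {u j, v j} are mutually orthogonal, so the
  simultaneous rotation of all of them is obtained by adding up the displacements.\<close>
definition rot_planes :: "('b \<Rightarrow> 'a::real_inner) \<Rightarrow> ('b \<Rightarrow> 'a) \<Rightarrow> 'b set \<Rightarrow> ('b \<Rightarrow> real) \<Rightarrow> 'a \<Rightarrow> 'a" where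
  "rot_planes u v J g x = x + (\<Sum>j\<in>J. rot (u j) (v j) (g j) x - x)"

lemma rot_planes_zero [simp]: "rot_planes u v J (\<lambda>_. 0) x = x"
  by (simp add: rot_planes_def)

lemma rot_planes_single:
  assumes "finite J" "j\<^sub>0 \<in> J" "\<And>j. j \<in> J \<Longrightarrow> j \<noteq> j\<^sub>0 \<Longrightarrow> g j = 0"
  shows "rot_planes u v J g x = rot (u j\<^sub>0) (v j\<^sub>0) (g j\<^sub>0) x"
proof -
  have "(\<Sum>j\<in>J. rot (u j) (v j) (g j) x - x) = (\<Sum>j\<in>J. if j = j\<^sub>0 then rot (u j) (v j) (g j) x - x else 0)"
    using assms(3) by (intro sum.cong) auto
  then show ?thesis using assms(1,2) by (simp add: rot_planes_def)
qed

lemma tendsto_rot_planes: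
  assumes "\<And>j. j \<in> J \<Longrightarrow> (\<lambda>n. cos (G n j)) \<longlonglongrightarrow> cos (g j)"
    and "\<And>j. j \<in> J \<Longrightarrow> (\<lambda>n. sin (G n j)) \<longlonglongrightarrow> sin (g j)"
  shows "(\<lambda>n. rot_planes u v J (G n) x) \<longlonglongrightarrow> rot_planes u v J g x"
  unfolding rot_planes_def rot_def by (intro tendsto_intros assms)

lemma reflection_pair_term:
  fixes u v x :: "'a::real_inner" and a :: real
  defines "w \<equiv> cos a *\<^sub>R u + sin a *\<^sub>R v"
  shows "2 *\<^sub>R ((2 * ((x \<bullet> w) * cos a) - x \<bullet> u) *\<^sub>R u) - 2 *\<^sub>R ((x \<bullet> w) *\<^sub>R w)
    = rot u v (-2 * a) x - x"
proof -
  define p q where "p = x \<bullet> u" and "q = x \<bullet> v"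
  define r where "r = cos a * p + sin a * q"
  have xw: "x \<bullet> w = r" by (simp add: w_def p_def q_def r_def inner_add_right)
  have c2: "cos (-2 * a) = 2 * (cos a * cos a) - 1" and s2: "sin (-2 * a) = - (2 * sin a * cos a)"
    using cos_double_cos[of a] sin_double[of a] by (simp_all add: power2_eq_square)
  have ss: "sin a * sin a = 1 - cos a * cos a"
    using sin_squared_eq[of a] by (simp add: power2_eq_square)
  have "2 * (2 * (r * cos a) - p) - 2 * (r * cos a) = (cos (-2 * a) - 1) * p - sin (-2 * a) * q"
    "- (2 * (r * sin a)) = sin (-2 * a) * p + (cos (-2 * a) - 1) * q"
    unfolding c2 s2 by (simp_all add: r_def algebra_simps ss)
  moreover have "2 *\<^sub>R ((2 * (r * cos a) - p) *\<^sub>R u) - 2 *\<^sub>R (r *\<^sub>R w)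
      = (2 * (2 * (r * cos a) - p) - 2 * (r * cos a)) *\<^sub>R u + (- (2 * (r * sin a))) *\<^sub>R v"
    by (simp add: w_def algebra_simps flip: scaleR_add_left)
  ultimately show ?thesis by (simp add: xw rot_def p_def q_def)
qed

context
  fixes u v :: "'b \<Rightarrow> 'a::real_inner" and J :: "'b set"
  assumes J: "finite J" and frame: "orthonormal_frame u v J"
begin

lemma inner_rot_planes:
  assumes "i \<in> J" "w = u i \<or> w = v i"
  shows "rot_planes u v J g x \<bullet> w = rot (u i) (v i) (g i) x \<bullet> w"
proof -
  have "(rot (u j) (v j) (g j) x - x) \<bullet> w = 0" if "j \<in> J" "j \<noteq> i" for j
    using assms orthonormal_frameD[OF frame _ that(1)] that
    by (intro inner_rot_diff_orthogonal) auto
  then have "(\<Sum>j\<in>J. rot (u j) (v j) (g j) x - x) \<bullet> w = (rot (u i) (v i) (g i) x - x) \<bullet> w"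
    unfolding inner_sum_left using J assms(1) by (subst sum.remove) auto
  then show ?thesis by (simp add: rot_planes_def inner_add_left inner_diff_left)
qed

lemma rot_planes_rot_planes:
  "rot_planes u v J g (rot_planes u v J h x) = rot_planes u v J (\<lambda>j. g j + h j) x"
proof -
  have "rot (u j) (v j) (g j) (rot_planes u v J h x) - rot_planes u v J h x
      = rot (u j) (v j) (g j + h j) x - rot (u j) (v j) (h j) x" if j: "j \<in> J" for j
  proof -
    have "rot (u j) (v j) (g j) (rot_planes u v J h x) - rot_planes u v J h x
        = rot (u j) (v j) (g j) (rot (u j) (v j) (h j) x) - rot (u j) (v j) (h j) x"
      using j by (intro rot_diff_cong inner_rot_planes) auto
    then show ?thesis using orthonormal_frameD[OF frame j j] by (simp add: rot_rot)
  qed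
  then have "rot_planes u v J g (rot_planes u v J h x)
      = rot_planes u v J h x + (\<Sum>j\<in>J. rot (u j) (v j) (g j + h j) x - rot (u j) (v j) (h j) x)"
    unfolding rot_planes_def[of u v J g] by simp
  also have "\<dots> = rot_planes u v J (\<lambda>j. g j + h j) x"
    by (simp add: rot_planes_def algebra_simps flip: sum.distrib)
  finally show ?thesis .
qed

lemma rot_planes_int_mult_mem:
  assumes "\<And>x. x \<in> E \<Longrightarrow> rot_planes u v J g x \<in> E"
    "\<And>x. x \<in> E \<Longrightarrow> rot_planes u v J (\<lambda>j. - g j) x \<in> E"
    and "x \<in> E"
  shows "rot_planes u v J (\<lambda>j. of_int k * g j) x \<in> E"
proof -
  have nat: "rot_planes u v J (\<lambda>j. real n * h j) x \<in> E"
    if h: "\<And>x. x \<in> E \<Longrightarrow> rot_planes u v J h x \<in> E" and "x \<in> E" for h n x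
    using \<open>x \<in> E\<close>
  proof (induction n arbitrary: x)
    case (Suc n)
    have "rot_planes u v J (\<lambda>j. real (Suc n) * h j) x
        = rot_planes u v J h (rot_planes u v J (\<lambda>j. real n * h j) x)"
      using rot_planes_rot_planes[of h "\<lambda>j. real n * h j" x] by (simp add: algebra_simps)
    then show ?case using Suc h by simp
  qed simp
  show ?thesis
  proof (cases "k \<ge> 0")
    case True
    then show ?thesis using nat[OF assms(1,3), of "nat k"] by simp
  next
    case False
    then show ?thesis using nat[OF assms(2,3), of "nat (- k)"] by simp
  qed
qed

end

definition tilted_span :: "('b \<Rightarrow> 'a::real_vector) \<Rightarrow> ('b \<Rightarrow> 'a) \<Rightarrow> ('b \<Rightarrow> real) \<Rightarrow> 'b set \<Rightarrow> 'a set" where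
  "tilted_span u v a J = span ((\<lambda>j. cos (a j) *\<^sub>R u j + sin (a j) *\<^sub>R v j) ` J)"

lemma refl_sub_tilted_span_eq_rot_planes:
  fixes u v :: "'b \<Rightarrow> 'a::euclidean_space"
  assumes J: "finite J" and frame: "orthonormal_frame u v J"
  shows "refl_sub (span (u ` J)) (refl_sub (tilted_span u v a J) x)
    = rot_planes u v J (\<lambda>j. -2 * a j) x"
proof -
  define w where "w j = cos (a j) *\<^sub>R u j + sin (a j) *\<^sub>R v j" for j
  have wu: "w j \<bullet> u i = (if j = i then cos (a j) else 0)" if "i \<in> J" "j \<in> J" for i j
    using orthonormal_frameD[OF frame that(2,1)] by (simp add: w_def inner_add_left)
  have "w i \<bullet> w j = (if i = j then 1 else 0)" if "i \<in> J" "j \<in> J" for i j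
    using orthonormal_frameD[OF frame that] orthonormal_frameD[OF frame that(2,1)]
    by (auto simp: w_def inner_add_left inner_add_right power2_eq_square[symmetric])
  then have Rw: "refl_sub (tilted_span u v a J) x = 2 *\<^sub>R (\<Sum>j\<in>J. (x \<bullet> w j) *\<^sub>R w j) - x"
    unfolding tilted_span_def w_def[abs_def] by (rule refl_sub_span_orthonormal[OF J])
  define y where "y = refl_sub (tilted_span u v a J) x"
  have yu: "y \<bullet> u i = 2 * ((x \<bullet> w i) * cos (a i)) - x \<bullet> u i" if i: "i \<in> J" for i
  proof -
    have "(\<Sum>j\<in>J. (x \<bullet> w j) *\<^sub>R w j) \<bullet> u i = (\<Sum>j\<in>J. if j = i then (x \<bullet> w j) * cos (a j) else 0)"
      unfolding inner_sum_left by (intro sum.cong refl) (simp add: wu[OF i])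
    also have "\<dots> = (x \<bullet> w i) * cos (a i)" using J i by simp
    finally show ?thesis by (simp add: y_def Rw inner_diff_left)
  qed
  have "u i \<bullet> u j = (if i = j then 1 else 0)" if "i \<in> J" "j \<in> J" for i j
    using orthonormal_frameD[OF frame that] by simp
  then have "refl_sub (span (u ` J)) y = 2 *\<^sub>R (\<Sum>j\<in>J. (y \<bullet> u j) *\<^sub>R u j) - y"
    by (rule refl_sub_span_orthonormal[OF J])
  also have "(\<Sum>j\<in>J. (y \<bullet> u j) *\<^sub>R u j) = (\<Sum>j\<in>J. (2 * ((x \<bullet> w j) * cos (a j)) - x \<bullet> u j) *\<^sub>R u j)"
    by (rule sum.cong) (simp_all add: yu)
  also have "2 *\<^sub>R (\<Sum>j\<in>J. (2 * ((x \<bullet> w j) * cos (a j)) - x \<bullet> u j) *\<^sub>R u j) - y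
      = x + (\<Sum>j\<in>J. 2 *\<^sub>R ((2 * ((x \<bullet> w j) * cos (a j)) - x \<bullet> u j) *\<^sub>R u j)
                    - 2 *\<^sub>R ((x \<bullet> w j) *\<^sub>R w j))"
    unfolding y_def Rw scaleR_sum_right sum_subtractf by simp
  also have "\<dots> = rot_planes u v J (\<lambda>j. -2 * a j) x"
    unfolding rot_planes_def w_def reflection_pair_term ..
  finally show ?thesis by (simp add: y_def)
qed

section \<open>Kronecker's theorem and dense orbits\<close>

text \<open>Normalising by pi turns the relations between pi, alpha 1, ..., alpha d into integer
  relations between the numbers alpha 1 / pi, ..., alpha d / pi, 1 used by Kronecker's theorem.\<close>
lemma pi_alphas_Q_indep_int_relation:
  fixes \<alpha> :: "nat \<Rightarrow> real" and c :: "nat \<Rightarrow> int"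
  assumes indep: "pi_alphas_Q_indep d \<alpha>"
    and rel: "(\<Sum>i\<le>d. of_int (c i) * (if i < d then \<alpha> (Suc i) / pi else 1)) = 0"
    and i: "i \<le> d"
  shows "c i = 0"
proof -
  define q :: "nat \<Rightarrow> rat" where "q j = of_int (if j = 0 then c d else c (j - 1))" for j
  have "(\<Sum>i\<le>d. of_int (c i) * (if i < d then \<alpha> (Suc i) / pi else 1))
      = (\<Sum>i<d. of_int (c i) * \<alpha> (Suc i)) / pi + of_int (c d)"
    by (simp add: lessThan_Suc_atMost[symmetric] sum_divide_distrib)
  with rel have "of_int (c d) * pi + (\<Sum>i<d. of_int (c i) * \<alpha> (Suc i)) = 0"
    by (simp add: field_simps)
  moreover have "(\<Sum>j=1..d. of_rat (q j) * \<alpha> j) = (\<Sum>i<d. of_int (c i) * \<alpha> (Suc i))"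
    using sum.atLeast1_atMost_eq[of "\<lambda>j. of_rat (q j) * \<alpha> j" d] by (simp add: q_def)
  ultimately have "of_rat (q 0) * pi + (\<Sum>j=1..d. of_rat (q j) * \<alpha> j) = 0"
    by (simp add: q_def)
  then have "q j = 0" if "j \<le> d" for j using indep that unfolding pi_alphas_Q_indep_def by auto
  then show ?thesis using i q_def[of 0] q_def[of "Suc i"] by (cases "i = d") auto
qed

lemma normalized_angles_int_independent:
  fixes \<alpha> :: "nat \<Rightarrow> real" and d :: nat
  defines "\<theta> \<equiv> \<lambda>i. if i < d then \<alpha> (Suc i) / pi else 1"
  assumes indep: "pi_alphas_Q_indep d \<alpha>"
  shows "inj_on \<theta> {..d}" "module.independent (\<lambda>r x. of_int r * x) (\<theta> ` {..d})"
proof -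
  interpret Z: Modules.module "\<lambda>r. (*) (real_of_int r)"
    by (simp add: Modules.module.intro distrib_left mult.commute)
  have rel: "c i = 0" if "(\<Sum>i\<le>d. of_int (c i) * \<theta> i) = 0" "i \<le> d" for c i
    using pi_alphas_Q_indep_int_relation[OF indep] that by (simp add: \<theta>_def)
  show inj: "inj_on \<theta> {..d}"
  proof (rule inj_onI, rule ccontr)
    fix i j assume ij: "i \<in> {..d}" "j \<in> {..d}" "\<theta> i = \<theta> j" "i \<noteq> j"
    define c :: "nat \<Rightarrow> int" where "c l = (if l = i then 1 else if l = j then -1 else 0)" for l
    have "(\<Sum>l\<le>d. of_int (c l) * \<theta> l)
        = (\<Sum>l\<le>d. (if l = i then \<theta> l else 0) - (if l = j then \<theta> l else 0))"
      using ij(4) by (intro sum.cong) (auto simp: c_def)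
    also have "\<dots> = \<theta> i - \<theta> j" using ij by (simp add: sum_subtractf)
    finally have "(\<Sum>l\<le>d. of_int (c l) * \<theta> l) = 0" using ij(3) by simp
    then show False using rel[of c i] ij(1) by (simp add: c_def)
  qed
  show "Z.independent (\<theta> ` {..d})"
    unfolding Z.independent_explicit_module
  proof (intro allI impI)
    fix t and u :: "real \<Rightarrow> int" and v
    assume t: "finite t" "t \<subseteq> \<theta> ` {..d}" and sum0: "(\<Sum>v\<in>t. real_of_int (u v) * v) = 0"
      and v: "v \<in> t"
    define c where "c i = (if \<theta> i \<in> t then u (\<theta> i) else 0)" for i
    have "(\<Sum>v\<in>t. real_of_int (u v) * v)
        = (\<Sum>v\<in>\<theta> ` {..d}. if v \<in> t then real_of_int (u v) * v else 0)"
      using t sum.inter_restrict[of "\<theta> ` {..d}" "\<lambda>v. real_of_int (u v) * v" t]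
      by (simp add: Int_absorb1)
    also have "\<dots> = (\<Sum>i\<le>d. if \<theta> i \<in> t then real_of_int (u (\<theta> i)) * \<theta> i else 0)"
      by (simp add: sum.reindex[OF inj])
    also have "\<dots> = (\<Sum>i\<le>d. of_int (c i) * \<theta> i)"
      by (intro sum.cong) (auto simp: c_def)
    finally obtain i where "i \<le> d" "v = \<theta> i" "c i = 0" using rel sum0 t(2) v by fastforce
    then show "u v = 0" using v by (simp add: c_def)
  qed
qed

lemma kronecker_doubled_angles:
  fixes \<alpha> \<phi> :: "nat \<Rightarrow> real"
  assumes indep: "pi_alphas_Q_indep d \<alpha>" and e: "e > 0"
  shows "\<exists>k::int. \<exists>m::nat \<Rightarrow> int. \<forall>j\<in>{1..d}.
    \<bar>of_int k * (2 * \<alpha> j) + 2 * pi * of_int (m j) - \<phi> j\<bar> < e"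
proof -
  define \<theta> where "\<theta> i = (if i < d then \<alpha> (Suc i) / pi else 1)" for i
  obtain k m where km: "\<And>i. i < d \<Longrightarrow>
      \<bar>of_int k * \<theta> i - of_int (m i) - (- \<phi> (Suc i) / (2 * pi))\<bar> < e / (2 * pi)"
    using Kronecker_thm_2[of \<theta> d "e / (2 * pi)" "\<lambda>i. - \<phi> (Suc i) / (2 * pi)"] e
      normalized_angles_int_independent[OF indep]
    by (auto simp: \<theta>_def[abs_def])
  have "\<bar>of_int (- k) * (2 * \<alpha> j) + 2 * pi * of_int (m (j - 1)) - \<phi> j\<bar> < e" if j: "j \<in> {1..d}" for j
  proof -
    have "j - 1 < d" "Suc (j - 1) = j" using j by auto
    then have "of_int (- k) * (2 * \<alpha> j) + 2 * pi * of_int (m (j - 1)) - \<phi> j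
        = - (2 * pi) * (of_int k * \<theta> (j - 1) - of_int (m (j - 1)) - (- \<phi> j / (2 * pi)))"
      by (simp add: \<theta>_def field_simps)
    then have "\<bar>of_int (- k) * (2 * \<alpha> j) + 2 * pi * of_int (m (j - 1)) - \<phi> j\<bar>
        = (2 * pi) * \<bar>of_int k * \<theta> (j - 1) - of_int (m (j - 1)) - (- \<phi> j / (2 * pi))\<bar>"
      by (simp add: abs_mult)
    also have "\<dots> < (2 * pi) * (e / (2 * pi))"
      using km[of "j - 1"] \<open>Suc (j - 1) = j\<close> \<open>j - 1 < d\<close> by (intro mult_strict_left_mono) auto
    finally show ?thesis by simp
  qed
  then show ?thesis by (intro exI[of _ "- k"] exI[of _ "\<lambda>j. m (j - 1)"]) blast
qed

lemma tendsto_of_dist_lt_inverse: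
  fixes f :: "nat \<Rightarrow> real"
  assumes "\<And>n. \<bar>f n - c\<bar> < inverse (real (Suc n))"
  shows "f \<longlonglongrightarrow> c"
proof (rule tendsto_sandwich[of "\<lambda>n. c - inverse (real (Suc n))" f sequentially "\<lambda>n. c + inverse (real (Suc n))"])
  show "\<forall>\<^sub>F n in sequentially. c - inverse (real (Suc n)) \<le> f n"
    "\<forall>\<^sub>F n in sequentially. f n \<le> c + inverse (real (Suc n))"
    using assms by (auto intro!: always_eventually simp: abs_less_iff less_imp_le algebra_simps)
  show "(\<lambda>n. c - inverse (real (Suc n))) \<longlonglongrightarrow> c" "(\<lambda>n. c + inverse (real (Suc n))) \<longlonglongrightarrow> c"
    using tendsto_diff[OF tendsto_const LIMSEQ_inverse_real_of_nat, of c]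
      tendsto_add[OF tendsto_const LIMSEQ_inverse_real_of_nat, of c] by simp_all
qed

lemma rot_planes_mem_if_dense_orbit:
  assumes E: "closed E"
    and orbit: "\<And>k::int. \<And>x. x \<in> E \<Longrightarrow> rot_planes u v J (\<lambda>j. of_int k * g j) x \<in> E"
    and dense: "\<And>e. e > 0 \<Longrightarrow> \<exists>k::int. \<exists>m::'b \<Rightarrow> int. \<forall>j\<in>J. \<bar>of_int k * g j + 2 * pi * of_int (m j) - \<phi> j\<bar> < e"
    and x: "x \<in> E"
  shows "rot_planes u v J \<phi> x \<in> E"
proof -
  obtain K :: "nat \<Rightarrow> int" and M :: "nat \<Rightarrow> 'b \<Rightarrow> int"
    where KM: "\<And>n j. j \<in> J \<Longrightarrow> \<bar>of_int (K n) * g j + 2 * pi * of_int (M n j) - \<phi> j\<bar> < inverse (real (Suc n))"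
    using dense[of "inverse (real (Suc _))"] by (metis inverse_positive_iff_positive of_nat_0_less_iff zero_less_Suc)
  have lim: "(\<lambda>n. of_int (K n) * g j + 2 * pi * of_int (M n j)) \<longlonglongrightarrow> \<phi> j" if "j \<in> J" for j
    using KM[OF that] by (rule tendsto_of_dist_lt_inverse)
  have "(\<lambda>n. cos (of_int (K n) * g j)) \<longlonglongrightarrow> cos (\<phi> j)" "(\<lambda>n. sin (of_int (K n) * g j)) \<longlonglongrightarrow> sin (\<phi> j)"
    if "j \<in> J" for j
    using tendsto_cos[OF lim[OF that]] tendsto_sin[OF lim[OF that]] by (simp_all add: cos_add sin_add)
  then have "(\<lambda>n. rot_planes u v J (\<lambda>j. of_int (K n) * g j) x) \<longlonglongrightarrow> rot_planes u v J \<phi> x"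
    by (rule tendsto_rot_planes)
  with orbit[OF x] show ?thesis by (rule closed_sequentially[OF E])
qed

lemma saturated_plane_if_reflection_pair_invariant:
  fixes u v :: "'b \<Rightarrow> 'a::euclidean_space"
  assumes E: "closed E" and J: "finite J" and frame: "orthonormal_frame u v J"
    and UW: "\<And>x. x \<in> E \<Longrightarrow> refl_sub (span (u ` J)) (refl_sub (tilted_span u v a J) x) \<in> E"
    and WU: "\<And>x. x \<in> E \<Longrightarrow> refl_sub (tilted_span u v a J) (refl_sub (span (u ` J)) x) \<in> E"
    and dense: "\<And>\<phi> e. e > 0 \<Longrightarrow> \<exists>k::int. \<exists>m::'b \<Rightarrow> int. \<forall>j\<in>J. \<bar>of_int k * (2 * a j) + 2 * pi * of_int (m j) - \<phi> j\<bar> < e"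
    and j\<^sub>0: "j\<^sub>0 \<in> J"
  shows "saturated E (span {u j\<^sub>0, v j\<^sub>0})"
proof -
  let ?U = "span (u ` J)" and ?W = "tilted_span u v a J"
  have UW_rot: "refl_sub ?U (refl_sub ?W x) = rot_planes u v J (\<lambda>j. - (2 * a j)) x" for x
    using refl_sub_tilted_span_eq_rot_planes[OF J frame] by simp
  have "refl_sub ?W (refl_sub ?U x) = rot_planes u v J (\<lambda>j. 2 * a j) x" for x
  proof -
    have "refl_sub ?W (refl_sub ?U x)
        = rot_planes u v J (\<lambda>j. 2 * a j) (refl_sub ?U (refl_sub ?W (refl_sub ?W (refl_sub ?U x))))"
      using rot_planes_rot_planes[OF J frame, of "\<lambda>j. 2 * a j" "\<lambda>j. - (2 * a j)"] UW_rot by simp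
    then show ?thesis by (simp add: refl_sub_refl_sub tilted_span_def)
  qed
  then have orbit: "rot_planes u v J (\<lambda>j. of_int k * (2 * a j)) x \<in> E" if "x \<in> E" for k :: int and x
    using rot_planes_int_mult_mem[OF J frame, where g = "\<lambda>j. 2 * a j"] UW WU UW_rot that by metis
  have "rot (u j\<^sub>0) (v j\<^sub>0) t x \<in> E" if "x \<in> E" for t x
  proof -
    have "rot_planes u v J (\<lambda>j. if j = j\<^sub>0 then t else 0) x = rot (u j\<^sub>0) (v j\<^sub>0) t x"
      using rot_planes_single[OF J j\<^sub>0, of "\<lambda>j. if j = j\<^sub>0 then t else 0"] by simp
    moreover have "rot_planes u v J (\<lambda>j. if j = j\<^sub>0 then t else 0) x \<in> E"
      by (rule rot_planes_mem_if_dense_orbit[OF E orbit dense that])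
    ultimately show ?thesis by simp
  qed
  then show ?thesis
    using orthonormal_frameD[OF frame j\<^sub>0 j\<^sub>0] by (intro saturated_plane_if_rot_invariant) auto
qed

section \<open>Adding transversal subspaces\<close>

lemma dim_orthogonal_comp:
  fixes M :: "'a::euclidean_space set"
  assumes "subspace M"
  shows "dim (orthogonal_comp M) + dim M = DIM('a)"
proof -
  have "{y \<in> UNIV. \<forall>x\<in>M. orthogonal x y} = orthogonal_comp M"
    by (auto simp: orthogonal_comp_def)
  then show ?thesis
    using dim_subspace_orthogonal_to_vectors[OF assms subspace_UNIV subset_UNIV] by simp
qed

lemma exists_nonzero_orthogonal_comp:
  fixes A M :: "'a::euclidean_space set"
  assumes A: "subspace A" and M: "subspace M" and lt: "dim M < dim A"
  obtains c where "c \<in> A" "c \<in> orthogonal_comp M" "c \<noteq> 0"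
proof -
  have "dim {x + y |x y. x \<in> A \<and> y \<in> orthogonal_comp M} + dim (A \<inter> orthogonal_comp M)
      = dim A + dim (orthogonal_comp M)"
    by (rule dim_sums_Int[OF A subspace_orthogonal_comp])
  moreover have "dim {x + y |x y. x \<in> A \<and> y \<in> orthogonal_comp M} \<le> DIM('a)"
    by (rule dim_subset_UNIV)
  ultimately have "dim (A \<inter> orthogonal_comp M) \<noteq> 0"
    using dim_orthogonal_comp[OF M] lt by linarith
  then have "\<not> A \<inter> orthogonal_comp M \<subseteq> {0}" by auto
  then show thesis using that by blast
qed

lemma orth_proj_surj_if_transversal:
  fixes A M :: "'a::euclidean_space set"
  assumes A: "subspace A" and M: "subspace M" and tr: "M \<inter> orthogonal_comp A = {0}"
  shows "orth_proj M ` A = M"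
proof (rule ccontr)
  let ?P = "orth_proj M ` A"
  assume "?P \<noteq> M"
  moreover have "?P \<subseteq> M" using orth_proj_in[OF M] by blast
  moreover have "subspace ?P" by (rule linear_subspace_image[OF linear_orth_proj[OF M] A])
  ultimately have "span ?P \<subset> span M" using M by (metis psubsetI span_eq_iff)
  then obtain x where x: "x \<noteq> 0" "x \<in> span M" "\<And>y. y \<in> span ?P \<Longrightarrow> orthogonal x y"
    using orthogonal_to_subspace_exists_gen by blast
  then have "x \<in> M" using M by (metis span_eq_iff)
  have "x \<in> orthogonal_comp A"
    unfolding orthogonal_comp_def
  proof (intro CollectI ballI)
    fix a assume "a \<in> A"
    then have "orthogonal x (orth_proj M a)" using x(3) by (auto intro: span_base)
    then show "orthogonal a x" using inner_orth_proj[OF M \<open>x \<in> M\<close>, of a]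
      by (simp add: orthogonal_def inner_commute)
  qed
  then show False using tr x(1) \<open>x \<in> M\<close> by blast
qed

text \<open>The reflection R in H maps the saturated subspace A to a second one meeting A in a nonzero
  vector c \<perp> M (which exists for dimensional reasons), and by transversality every vector of M is
  half the sum a + R a (up to sign) for some a in A.\<close>
lemma saturated_extend_transversal:
  fixes A H M E :: "'a::euclidean_space set"
  assumes E: "E \<subseteq> sphere 0 1" "closed E"
    and A: "subspace A" "saturated E A"
    and H: "subspace H" "\<And>x. x \<in> E \<Longrightarrow> refl_sub H x \<in> E" and HM: "M = H \<or> M = orthogonal_comp H"
    and lt: "dim M < dim A" and tr: "M \<inter> orthogonal_comp A = {0}"
  shows "saturated E (span (A \<union> M))"
proof -
  have M: "subspace M" using HM H subspace_orthogonal_comp by auto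
  obtain \<sigma> :: real where \<sigma>: "\<sigma> * \<sigma> = 1" and R: "\<And>x. refl_sub H x = \<sigma> *\<^sub>R refl_sub M x"
  proof (cases "M = H")
    case True then show ?thesis using that[of 1] by simp
  next
    case False
    then show ?thesis using that[of "-1"] HM refl_sub_orthogonal_comp[OF H(1)] by auto
  qed
  let ?R = "refl_sub H"
  have B: "subspace (?R ` A)" "saturated E (?R ` A)"
    by (rule linear_subspace_image[OF linear_refl_sub[OF H(1)] A(1)], rule saturated_refl_sub[OF A(2) H])
  obtain c where c: "c \<in> A" "c \<in> orthogonal_comp M" "c \<noteq> 0"
    using exists_nonzero_orthogonal_comp[OF A(1) M lt] by blast
  have "refl_sub M c = - c"
    using c(2) by (intro refl_sub_eq_neg[OF M]) (auto simp: orthogonal_comp_def orthogonal_def inner_commute)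
  then have "?R c \<in> A" using R subspace_scale[OF A(1) c(1), of "- \<sigma>"] by simp
  then have "c \<in> ?R ` A" using refl_sub_refl_sub[OF H(1), of c] by (metis image_eqI)
  then have sat: "saturated E (span (A \<union> ?R ` A))"
    by (rule saturated_span_Un[OF E A B c(1) _ c(3)])
  have "y \<in> span (A \<union> ?R ` A)" if "y \<in> M" for y
  proof -
    have "y \<in> orth_proj M ` A" using orth_proj_surj_if_transversal[OF A(1) M tr] that by simp
    then obtain a where a: "a \<in> A" "orth_proj M a = y" by blast
    then have "?R a = \<sigma> *\<^sub>R (2 *\<^sub>R y - a)" using R[of a] by (simp add: refl_sub_def)
    then have "\<sigma> *\<^sub>R ?R a = 2 *\<^sub>R y - a" using \<sigma> by simp
    then have "y = (1/2) *\<^sub>R (\<sigma> *\<^sub>R ?R a + a)" by (simp add: algebra_simps)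
    moreover have "?R a \<in> span (A \<union> ?R ` A)" "a \<in> span (A \<union> ?R ` A)"
      using a(1) by (auto intro: span_base)
    ultimately show ?thesis by (simp add: span_add span_scale)
  qed
  moreover have "A \<subseteq> span (A \<union> ?R ` A)" using span_superset[of "A \<union> ?R ` A"] by blast
  ultimately have "span (A \<union> M) \<subseteq> span (A \<union> ?R ` A)"
    by (intro span_minimal[OF _ subspace_span]) blast
  then show ?thesis by (rule saturated_subset[OF sat])
qed

lemma saturated_span_chain:
  fixes e :: "nat \<Rightarrow> 'a::euclidean_space"
  assumes E: "E \<subseteq> sphere 0 1" "closed E"
    and planes: "\<And>m. 1 \<le> m \<Longrightarrow> m < N \<Longrightarrow> saturated E (span {e m, e (Suc m)})"
    and nonzero: "\<And>m. 1 \<le> m \<Longrightarrow> m < N \<Longrightarrow> e m \<noteq> 0" and N: "2 \<le> N"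
  shows "saturated E (span (e ` {1..N}))"
  using N
proof (induction N rule: dec_induct)
  case base
  have "{1..2::nat} = {1, 2}" by auto
  then show ?case using planes[of 1] N by (simp add: numeral_2_eq_2)
next
  case (step m)
  have "e m \<in> span (e ` {1..m})" "e m \<in> span {e m, e (Suc m)}"
    using step.hyps by (auto intro: span_base)
  then have "saturated E (span (span (e ` {1..m}) \<union> span {e m, e (Suc m)}))"
    using step nonzero planes by (intro saturated_span_Un[OF E subspace_span _ subspace_span]) auto
  moreover have "e ` {1..Suc m} \<subseteq> span (e ` {1..m}) \<union> span {e m, e (Suc m)}"
  proof
    fix y assume "y \<in> e ` {1..Suc m}"
    then obtain a where a: "a \<in> {1..Suc m}" "y = e a" by blast
    show "y \<in> span (e ` {1..m}) \<union> span {e m, e (Suc m)}"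
    proof (cases "a = Suc m")
      case True then show ?thesis using a by (simp add: span_base)
    next
      case False then show ?thesis using a span_base[of y "e ` {1..m}"] by auto
    qed
  qed
  then have "span (e ` {1..Suc m}) \<subseteq> span (span (e ` {1..m}) \<union> span {e m, e (Suc m)})"
    by (rule span_mono)
  ultimately show ?case by (rule saturated_subset)
qed

lemma saturated_span_UN_transversal:
  fixes M H :: "nat \<Rightarrow> 'a::euclidean_space set"
  assumes E: "E \<subseteq> sphere 0 1" "closed E"
    and start: "saturated E (span (\<Union>l\<in>{1..j\<^sub>0}. M l))" "j\<^sub>0 \<le> k"
    and H: "\<And>j. j\<^sub>0 < j \<Longrightarrow> j \<le> k \<Longrightarrow> subspace (H j)"
      "\<And>j x. j\<^sub>0 < j \<Longrightarrow> j \<le> k \<Longrightarrow> x \<in> E \<Longrightarrow> refl_sub (H j) x \<in> E"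
      "\<And>j. j\<^sub>0 < j \<Longrightarrow> j \<le> k \<Longrightarrow> M j = H j \<or> M j = orthogonal_comp (H j)"
    and dim: "\<And>j. j\<^sub>0 < j \<Longrightarrow> j \<le> k \<Longrightarrow> dim (M j) < dim (span (\<Union>l\<in>{1..j\<^sub>0}. M l))"
    and transversal: "\<And>j. j\<^sub>0 \<le> j \<Longrightarrow> j < k \<Longrightarrow>
      M (Suc j) \<inter> orthogonal_comp (span (\<Union>l\<in>{1..j}. M l)) = {0}"
  shows "saturated E (span (\<Union>l\<in>{1..k}. M l))"
  using start(2)
proof (induction k rule: dec_induct)
  case base show ?case by (rule start(1))
next
  case (step j)
  let ?L = "\<lambda>j. span (\<Union>l\<in>{1..j}. M l)"
  have j: "j\<^sub>0 < Suc j" "Suc j \<le> k" using step.hyps by auto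
  have "?L j\<^sub>0 \<subseteq> ?L j" using step.hyps by (intro span_mono UN_mono) auto
  then have "dim (M (Suc j)) < dim (?L j)"
    using dim[OF j] dim_subset[of "?L j\<^sub>0" "?L j"] by linarith
  then have "saturated E (span (?L j \<union> M (Suc j)))"
    using H[OF j] transversal[OF step.hyps]
    by (intro saturated_extend_transversal[OF E subspace_span step.IH])
  moreover have "(\<Union>l\<in>{1..Suc j}. M l) \<subseteq> ?L j \<union> M (Suc j)"
  proof
    fix y assume "y \<in> (\<Union>l\<in>{1..Suc j}. M l)"
    then obtain l where l: "l \<in> {1..Suc j}" "y \<in> M l" by blast
    show "y \<in> ?L j \<union> M (Suc j)"
    proof (cases "l = Suc j")
      case True then show ?thesis using l by simp
    next
      case False
      then have "y \<in> (\<Union>l\<in>{1..j}. M l)" using l by auto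
      then show ?thesis by (simp add: span_base)
    qed
  qed
  then have "?L (Suc j) \<subseteq> span (?L j \<union> M (Suc j))" by (rule span_mono)
  ultimately show ?case by (rule saturated_subset)
qed

section \<open>The configuration M 1, M 2, M 3\<close>

lemma refl_sub_orthogonal_comp_comp:
  fixes G H :: "'a::euclidean_space set"
  assumes "subspace G" "subspace H"
  shows "refl_sub (orthogonal_comp G) (refl_sub (orthogonal_comp H) x) = refl_sub G (refl_sub H x)"
  using linear_neg[OF linear_refl_sub[OF assms(1)]] by (simp add: refl_sub_orthogonal_comp assms)

lemma dim_span_orthonormal:
  fixes e :: "'b \<Rightarrow> 'a::euclidean_space"
  assumes I: "finite I" and orthonormal: "\<forall>a\<in>I. \<forall>b\<in>I. e a \<bullet> e b = (if a = b then 1 else 0)"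
  shows "dim (span (e ` I)) = card I"
proof -
  have "inj_on e I"
    using orthonormal by (intro inj_onI) (metis one_neq_zero)
  moreover have "0 \<notin> e ` I"
    using orthonormal by (metis (no_types, lifting) image_iff inner_zero_left zero_neq_one)
  then have "independent (e ` I)"
    using orthonormal
    by (intro pairwise_orthogonal_independent) (auto simp: pairwise_def orthogonal_def)
  ultimately show ?thesis using dim_span_eq_card_independent card_image by metis
qed

lemma orthonormal_frame_reindex:
  fixes e :: "'c \<Rightarrow> 'a::real_inner"
  assumes orthonormal: "\<forall>a\<in>I. \<forall>b\<in>I. e a \<bullet> e b = (if a = b then 1 else 0)"
    and "f ` J \<subseteq> I" "g ` J \<subseteq> I" "inj_on f J" "inj_on g J" "\<And>i j. i \<in> J \<Longrightarrow> j \<in> J \<Longrightarrow> f i \<noteq> g j"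
  shows "orthonormal_frame (\<lambda>j. e (f j)) (\<lambda>j. e (g j)) J"
  unfolding orthonormal_frame_def
proof (intro ballI conjI)
  fix i j assume ij: "i \<in> J" "j \<in> J"
  then have "f i \<in> I" "f j \<in> I" "g i \<in> I" "g j \<in> I" using assms(2,3) by auto
  then show "e (f i) \<bullet> e (f j) = (if i = j then 1 else 0)" "e (g i) \<bullet> e (g j) = (if i = j then 1 else 0)"
    "e (f i) \<bullet> e (g j) = 0"
    using orthonormal inj_onD[OF assms(4) _ ij] inj_onD[OF assms(5) _ ij] assms(6)[OF ij] by auto
qed

lemma pi_alphas_Q_indep_sin_nonzero:
  assumes indep: "pi_alphas_Q_indep d \<alpha>" and j: "j \<in> {1..d}"
  shows "sin (\<alpha> j) \<noteq> 0"
proof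
  assume "sin (\<alpha> j) = 0"
  then obtain z :: int where z: "\<alpha> j = of_int z * pi" unfolding sin_zero_iff_int2 by blast
  define q :: "nat \<Rightarrow> rat" where "q l = (if l = 0 then - of_int z else if l = j then 1 else 0)" for l
  have "(\<Sum>l=1..d. of_rat (q l) * \<alpha> l) = (\<Sum>l=1..d. if l = j then \<alpha> l else 0)"
    using j by (intro sum.cong) (auto simp: q_def)
  also have "\<dots> = \<alpha> j" using j by simp
  finally have "(\<Sum>l=1..d. of_rat (q l) * \<alpha> l) = \<alpha> j" .
  then have "of_rat (q 0) * pi + (\<Sum>l=1..d. of_rat (q l) * \<alpha> l) = 0"
    by (simp add: q_def z of_rat_minus)
  then have "\<forall>l\<in>{0..d}. q l = 0" using indep unfolding pi_alphas_Q_indep_def by blast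
  moreover have "q j = 1" using j by (simp add: q_def)
  ultimately show False using j by auto
qed

lemma configuration_spans:
  fixes e :: "nat \<Rightarrow> 'a::euclidean_space" and \<alpha> :: "nat \<Rightarrow> real" and d :: nat
  defines "u \<equiv> \<lambda>j. e (2 * j - 1)" and "v \<equiv> \<lambda>j. e (2 * j)"
    and "v' \<equiv> \<lambda>j. e (if j = 1 then 2 * d else 2 * j - 2)"
  assumes d: "1 \<le> d"
  shows "span {e (2 * j - 1) | j. j \<in> {1..d}} = span (u ` {1..d})"
    and "span {cos (\<alpha> j) *\<^sub>R e (2 * j - 1) + sin (\<alpha> j) *\<^sub>R e (2 * j) | j. j \<in> {1..d}}
      = tilted_span u v \<alpha> {1..d}"
    and "span ({cos (\<alpha> 1) *\<^sub>R e 1 + sin (\<alpha> 1) *\<^sub>R e (2 * d)}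
        \<union> {cos (\<alpha> j) *\<^sub>R e (2 * j - 1) + sin (\<alpha> j) *\<^sub>R e (2 * j - 2) | j. j \<in> {2..d}})
      = tilted_span u v' \<alpha> {1..d}"
proof -
  have "{1..d} = insert 1 {2..d}" using d by auto
  then have "{cos (\<alpha> 1) *\<^sub>R e 1 + sin (\<alpha> 1) *\<^sub>R e (2 * d)}
        \<union> {cos (\<alpha> j) *\<^sub>R e (2 * j - 1) + sin (\<alpha> j) *\<^sub>R e (2 * j - 2) | j. j \<in> {2..d}}
      = (\<lambda>j. cos (\<alpha> j) *\<^sub>R u j + sin (\<alpha> j) *\<^sub>R v' j) ` {1..d}"
    by (auto simp: u_def v'_def)
  then show "span ({cos (\<alpha> 1) *\<^sub>R e 1 + sin (\<alpha> 1) *\<^sub>R e (2 * d)}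
        \<union> {cos (\<alpha> j) *\<^sub>R e (2 * j - 1) + sin (\<alpha> j) *\<^sub>R e (2 * j - 2) | j. j \<in> {2..d}})
      = tilted_span u v' \<alpha> {1..d}"
    by (simp add: tilted_span_def)
qed (simp_all only: Setcompr_eq_image u_def v_def tilted_span_def)

lemma span_configuration:
  fixes e :: "nat \<Rightarrow> 'a::euclidean_space" and \<alpha> :: "nat \<Rightarrow> real" and d :: nat
  defines "u \<equiv> \<lambda>j. e (2 * j - 1)" and "v \<equiv> \<lambda>j. e (2 * j)"
    and "v' \<equiv> \<lambda>j. e (if j = 1 then 2 * d else 2 * j - 2)"
  assumes sin: "\<And>j. j \<in> {1..d} \<Longrightarrow> sin (\<alpha> j) \<noteq> 0"
  shows "span (span (u ` {1..d}) \<union> tilted_span u v \<alpha> {1..d} \<union> tilted_span u v' \<alpha> {1..d})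
    = span (e ` {1..2 * d})" (is "span ?L = ?S")
proof
  have S: "subspace ?S" by (rule subspace_span)
  have uS: "u j \<in> ?S" and vS: "v j \<in> ?S" and v'S: "v' j \<in> ?S" if "j \<in> {1..d}" for j
    using that unfolding u_def v_def v'_def by (auto intro!: span_base imageI)
  have "tilted_span u w \<alpha> {1..d} \<subseteq> ?S" if "\<And>j. j \<in> {1..d} \<Longrightarrow> w j \<in> ?S" for w
    unfolding tilted_span_def using uS that
    by (intro span_minimal[OF _ S] image_subsetI subspace_add[OF S] subspace_scale[OF S]) auto
  moreover have "span (u ` {1..d}) \<subseteq> ?S" using uS by (intro span_minimal[OF _ S] image_subsetI)
  ultimately have "?L \<subseteq> ?S" using vS v'S by (metis Un_least)
  then show "span ?L \<subseteq> ?S" by (rule span_minimal[OF _ S])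
next
  have L: "subspace (span ?L)" by (rule subspace_span)
  have "span (u ` {1..d}) \<subseteq> span ?L" "tilted_span u v \<alpha> {1..d} \<subseteq> span ?L"
    using span_superset[of ?L] by auto
  moreover have "u j \<in> span (u ` {1..d})"
    "cos (\<alpha> j) *\<^sub>R u j + sin (\<alpha> j) *\<^sub>R v j \<in> tilted_span u v \<alpha> {1..d}" if "j \<in> {1..d}" for j
    using that unfolding tilted_span_def by (auto intro!: span_base imageI)
  ultimately have uL: "u j \<in> span ?L" and wL: "cos (\<alpha> j) *\<^sub>R u j + sin (\<alpha> j) *\<^sub>R v j \<in> span ?L"
    if "j \<in> {1..d}" for j
    using that by (meson subsetD)+
  have "e a \<in> span ?L" if a: "a \<in> {1..2 * d}" for a
  proof (cases "odd a")
    case True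
    then obtain k where "a = 2 * k + 1" by (rule oddE)
    then have "u (k + 1) = e a" "k + 1 \<in> {1..d}" using a by (auto simp: u_def)
    then show ?thesis using uL by metis
  next
    case False
    then obtain j where j: "a = 2 * j" "j \<in> {1..d}" using a by (auto elim!: evenE)
    have "v j = (1 / sin (\<alpha> j)) *\<^sub>R ((cos (\<alpha> j) *\<^sub>R u j + sin (\<alpha> j) *\<^sub>R v j) - cos (\<alpha> j) *\<^sub>R u j)"
      using sin[OF j(2)] by simp
    then have "v j \<in> span ?L"
      using j(2) by (metis L uL wL subspace_diff subspace_scale)
    then show ?thesis using j by (simp add: v_def)
  qed
  then show "?S \<subseteq> span ?L" by (intro span_minimal[OF _ L]) auto
qed

lemma saturated_configuration:
  fixes e :: "nat \<Rightarrow> 'a::euclidean_space" and \<alpha> :: "nat \<Rightarrow> real" and d :: nat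
  defines "u \<equiv> \<lambda>j. e (2 * j - 1)" and "v \<equiv> \<lambda>j. e (2 * j)"
    and "v' \<equiv> \<lambda>j. e (if j = 1 then 2 * d else 2 * j - 2)"
  assumes E: "E \<subseteq> sphere 0 1" "closed E"
    and orthonormal: "\<forall>a\<in>{1..2 * d}. \<forall>b\<in>{1..2 * d}. e a \<bullet> e b = (if a = b then 1 else 0)"
    and d: "1 \<le> d" and indep: "pi_alphas_Q_indep d \<alpha>"
    and refl: "\<And>W x. W \<in> {tilted_span u v \<alpha> {1..d}, tilted_span u v' \<alpha> {1..d}} \<Longrightarrow> x \<in> E \<Longrightarrow>
      refl_sub (span (u ` {1..d})) (refl_sub W x) \<in> E \<and> refl_sub W (refl_sub (span (u ` {1..d})) x) \<in> E"
  shows "saturated E (span (e ` {1..2 * d}))"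
proof -
  have frame: "orthonormal_frame u v {1..d}" "orthonormal_frame u v' {1..d}"
    unfolding u_def v_def v'_def
    by (rule orthonormal_frame_reindex[OF orthonormal]; auto simp: inj_on_def split: if_splits; presburger)+
  have dense: "\<exists>k::int. \<exists>m::nat \<Rightarrow> int. \<forall>j\<in>{1..d}. \<bar>of_int k * (2 * \<alpha> j) + 2 * pi * of_int (m j) - \<phi> j\<bar> < \<epsilon>"
    if "\<epsilon> > 0" for \<phi> \<epsilon>
    by (rule kronecker_doubled_angles[OF indep that])
  have plane: "saturated E (span {u j, v j})" "saturated E (span {u j, v' j})" if "j \<in> {1..d}" for j
    using refl
    by (auto intro!: saturated_plane_if_reflection_pair_invariant[OF E(2) finite_atLeastAtMost _ _ _ dense that]
        frame)
  show ?thesis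
  proof (rule saturated_span_chain[OF E])
    fix m assume m: "1 \<le> m" "m < 2 * d"
    show "e m \<noteq> 0" using orthonormal m by (metis atLeastAtMost_iff inner_zero_left less_imp_le_nat zero_neq_one)
    show "saturated E (span {e m, e (Suc m)})"
    proof (cases "odd m")
      case True
      then have "u ((m + 1) div 2) = e m" "v ((m + 1) div 2) = e (Suc m)" "(m + 1) div 2 \<in> {1..d}"
        using m by (auto simp: u_def v_def elim!: oddE)
      then show ?thesis using plane by metis
    next
      case False
      then have "u (m div 2 + 1) = e (Suc m)" "v' (m div 2 + 1) = e m" "m div 2 + 1 \<in> {1..d}"
        using m by (auto simp: u_def v'_def elim!: evenE)
      then show ?thesis using plane by (metis insert_commute)
    qed
  qed (use d in simp)
qed

lemma saturated_configuration_sum: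
  fixes e :: "nat \<Rightarrow> 'a::euclidean_space" and \<alpha> :: "nat \<Rightarrow> real" and d :: nat and M\<^sub>1 M\<^sub>2 M\<^sub>3 :: "'a set"
  assumes E: "E \<subseteq> sphere 0 1" "closed E"
    and orthonormal: "\<forall>a\<in>{1..2 * d}. \<forall>b\<in>{1..2 * d}. e a \<bullet> e b = (if a = b then 1 else 0)"
    and d: "1 \<le> d" and indep: "pi_alphas_Q_indep d \<alpha>"
    and M\<^sub>1: "M\<^sub>1 = span {e (2 * j - 1) | j. j \<in> {1..d}}"
    and M\<^sub>2: "M\<^sub>2 = span {cos (\<alpha> j) *\<^sub>R e (2 * j - 1) + sin (\<alpha> j) *\<^sub>R e (2 * j) | j. j \<in> {1..d}}"
    and M\<^sub>3: "M\<^sub>3 = span ({cos (\<alpha> 1) *\<^sub>R e 1 + sin (\<alpha> 1) *\<^sub>R e (2 * d)}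
      \<union> {cos (\<alpha> j) *\<^sub>R e (2 * j - 1) + sin (\<alpha> j) *\<^sub>R e (2 * j - 2) | j. j \<in> {2..d}})"
    and refl: "\<And>W x. W \<in> {M\<^sub>2, M\<^sub>3} \<Longrightarrow> x \<in> E \<Longrightarrow>
      refl_sub M\<^sub>1 (refl_sub W x) \<in> E \<and> refl_sub W (refl_sub M\<^sub>1 x) \<in> E"
  shows "saturated E (span (M\<^sub>1 \<union> M\<^sub>2 \<union> M\<^sub>3))" "dim (span (M\<^sub>1 \<union> M\<^sub>2 \<union> M\<^sub>3)) = 2 * d"
proof -
  note M_eq = M\<^sub>1 M\<^sub>2 M\<^sub>3 configuration_spans(1)[OF d, where e = e]
    configuration_spans(2,3)[OF d, where e = e and \<alpha> = \<alpha>]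
  have span: "span (M\<^sub>1 \<union> M\<^sub>2 \<union> M\<^sub>3) = span (e ` {1..2 * d})"
    unfolding M_eq using pi_alphas_Q_indep_sin_nonzero[OF indep] by (rule span_configuration)
  show "saturated E (span (M\<^sub>1 \<union> M\<^sub>2 \<union> M\<^sub>3))"
    unfolding span using refl unfolding M_eq
    by (intro saturated_configuration[OF E orthonormal d indep]) blast
  show "dim (span (M\<^sub>1 \<union> M\<^sub>2 \<union> M\<^sub>3)) = 2 * d"
    unfolding span using dim_span_orthonormal[OF _ orthonormal] by simp
qed

theorem theorem3p8:
  fixes H M :: "nat \<Rightarrow> 'a::euclidean_space set"
    and k i n d :: nat
    and e :: "nat \<Rightarrow> 'a"
    and \<alpha> :: "nat \<Rightarrow> real"
    and E :: "'a set"
  assumes n_def: "n = DIM('a)"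
    and k_ge: "k \<ge> 3"
    and i_ge: "1 \<le> i" and i_le: "i \<le> n - 2"
    and H_sub: "\<forall>j\<in>{1..k}. subspace (H j) \<and> dim (H j) = i"
    and dM: "(2 \<le> i \<and> 2 * i \<le> n \<and> d = i \<and> (\<forall>j\<in>{1..k}. M j = H j))
           \<or> (n < 2 * i \<and> i \<le> n - 2 \<and> d = n - i \<and> (\<forall>j\<in>{1..k}. M j = orthogonal_comp (H j)))"
    and e_orthonormal: "\<forall>a\<in>{1..n}. \<forall>b\<in>{1..n}. e a \<bullet> e b = (if a = b then 1 else 0)"
    and \<alpha>_pos: "0 < \<alpha> 1"
    and \<alpha>_mono: "\<forall>j\<in>{1..<d}. \<alpha> j < \<alpha> (Suc j)"
    and \<alpha>_lt: "\<alpha> d < pi / 2"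
    and \<alpha>_indep: "pi_alphas_Q_indep d \<alpha>"
    and M1: "M 1 = span {e (2 * j - 1) | j. j \<in> {1..d}}"
    and M2: "M 2 = span {cos (\<alpha> j) *\<^sub>R e (2 * j - 1) + sin (\<alpha> j) *\<^sub>R e (2 * j) | j. j \<in> {1..d}}"
    and M3: "M 3 = span ({cos (\<alpha> 1) *\<^sub>R e 1 + sin (\<alpha> 1) *\<^sub>R e (2 * d)}
               \<union> {cos (\<alpha> j) *\<^sub>R e (2 * j - 1) + sin (\<alpha> j) *\<^sub>R e (2 * j - 2) | j. j \<in> {2..d}})"
    and sum_all: "span (\<Union>j\<in>{1..k}. M j) = UNIV"
    and transv: "\<forall>j\<in>{3..k-1}. M (j + 1) \<inter> orthogonal_comp (span (\<Union>l\<in>{1..j}. M l)) = {0}"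
    and E_sub: "E \<subseteq> sphere 0 1"
    and E_ne: "E \<noteq> {}"
    and E_closed: "closed E"
    and E_inv: "\<forall>j\<in>{1..k}. refl_sub (H j) ` E = E"
  shows "E = sphere 0 1"
proof -
  have d: "1 \<le> d" "2 * d \<le> n" using dM i_le by auto
  have H: "subspace (H j)" "\<And>x. x \<in> E \<Longrightarrow> refl_sub (H j) x \<in> E"
    "M j = H j \<or> M j = orthogonal_comp (H j)" if j: "j \<in> {1..k}" for j
    using H_sub E_inv dM j by blast+
  have dim_M: "dim (M j) = d" if j: "j \<in> {1..k}" for j
    using H_sub dM j dim_orthogonal_comp[OF H(1)[OF j]] n_def by auto
  have refl_pair: "refl_sub (M a) (refl_sub (M b) x) \<in> E" if "a \<in> {1..k}" "b \<in> {1..k}" "x \<in> E" for a b x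
    using dM H(1,2)[OF that(1)] H(1,2)[OF that(2)] that refl_sub_orthogonal_comp_comp[of "H a" "H b" x]
    by auto
  have "{1..3::nat} = {1, 2, 3}" by auto
  then have M123: "(\<Union>l\<in>{1..3}. M l) = M 1 \<union> M 2 \<union> M 3" "1 \<in> {1..k}" "2 \<in> {1..k}" "3 \<in> {1..k}"
    using k_ge by (auto simp: Un_assoc)
  have "\<forall>a\<in>{1..2 * d}. \<forall>b\<in>{1..2 * d}. e a \<bullet> e b = (if a = b then 1 else 0)"
    using e_orthonormal d(2) by auto
  then have first3: "saturated E (span (\<Union>l\<in>{1..3}. M l))" "dim (span (\<Union>l\<in>{1..3}. M l)) = 2 * d"
    unfolding M123(1) using refl_pair M123(2-4)
    by (intro saturated_configuration_sum[OF E_sub E_closed _ d(1) \<alpha>_indep M1 M2 M3]; force)+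
  have "saturated E (span (\<Union>l\<in>{1..k}. M l))"
  proof (rule saturated_span_UN_transversal[OF E_sub E_closed])
    show "saturated E (span (\<Union>l\<in>{1..3}. M l))" "3 \<le> k" using first3 k_ge by simp_all
    fix j assume j: "3 < j" "j \<le> k"
    then show "subspace (H j)" "M j = H j \<or> M j = orthogonal_comp (H j)"
      "dim (M j) < dim (span (\<Union>l\<in>{1..3}. M l))" "\<And>x. x \<in> E \<Longrightarrow> refl_sub (H j) x \<in> E"
      using H dim_M first3 d(1) by auto
  next
    fix j assume "3 \<le> j" "j < k"
    then show "M (Suc j) \<inter> orthogonal_comp (span (\<Union>l\<in>{1..j}. M l)) = {0}"
      using transv by auto
  qed
  then show ?thesis using sum_all saturated_UNIV_imp_sphere E_sub E_ne by simp
qed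

end
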